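(* Let $X$ and $Y$ be discrete random variables with finite support. Let $\mathbf{p}$ be the distribution of $X$ and $\mathbf{q}$ the distribution of $Y$, each written as a vector sorted in nonincreasing order, with the shorter vector padded with zeros to the common length. If $H(Y\mid X)=0$, then $$H(X)\geq H(Y)+D(\mathbf{q}\,\|\,\mathbf{p}).$$ Equivalently, for every function $f$ one has $H(X)\geq H(f(X))+D(\mathbf{q}\|\mathbf{p})$, where $\mathbf{q}$ is the sorted distribution of $f(X)$.
   Context: $H$ denotes Shannon entropy in bits. $D(\mathbf{b}\|\mathbf{a})=\sum_i b_i\log_2(b_i/a_i)$ is the relative entropy, computed componentwise on the sorted and padded vectors, with the convention $0\log(0/a)=0$. *)

theory Defs
  imports "HOL-Probability.Probability" "HOL-Library.Multiset"
begin

definition shannon_entropy :: "'a pmf \<Rightarrow> real" where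
  "shannon_entropy p = - (\<Sum>x\<in>set_pmf p. pmf p x * log 2 (pmf p x))"

definition cond_entropy :: "('a \<times> 'b) pmf \<Rightarrow> real" where
  "cond_entropy J = - (\<Sum>xy\<in>set_pmf J.
      pmf J xy * log 2 (pmf J xy / pmf (map_pmf fst J) (fst xy)))"

definition sorted_probs :: "'a pmf \<Rightarrow> real list" where
  "sorted_probs p = rev (sorted_list_of_multiset (image_mset (pmf p) (mset_set (set_pmf p))))"

definition sorted_vec :: "'a pmf \<Rightarrow> nat \<Rightarrow> real" where
  "sorted_vec p i = (if i < length (sorted_probs p) then sorted_probs p ! i else 0)"

definition rel_entropy :: "(nat \<Rightarrow> real) \<Rightarrow> (nat \<Rightarrow> real) \<Rightarrow> nat \<Rightarrow> real" where
  "rel_entropy b a n = (\<Sum>i<n. if b i = 0 then 0 else b i * log 2 (b i / a i))"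

end

theory Submission
  imports Defs "HOL-Combinatorics.List_Permutation"
begin

(* Zero conditional entropy means Y = f(X). Grouping the terms of -H(X) by the fibres of f and
   bounding each log p(x) by log p(g y), where g y has the largest mass in the fibre over y, gives
   -H(X) <= sum_y q(y) log p(g y). As g is injective, the rearrangement inequality bounds this by
   sum_j q_j log p_j for the sorted vectors, which is -H(Y) - D(q||p). *)

lemma pmf_map_pmf_finite:
  assumes "finite (set_pmf p)"
  shows "pmf (map_pmf f p) y = (\<Sum>x\<in>{x\<in>set_pmf p. f x = y}. pmf p x)"
proof -
  have "pmf (map_pmf f p) y = measure p (f -` {y} \<inter> set_pmf p)"
    by (simp add: pmf_map measure_Int_set_pmf)
  also have "f -` {y} \<inter> set_pmf p = {x\<in>set_pmf p. f x = y}"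
    by auto
  also have "measure p {x\<in>set_pmf p. f x = y} = (\<Sum>x\<in>{x\<in>set_pmf p. f x = y}. pmf p x)"
    using assms by (intro measure_measure_pmf_finite) auto
  finally show ?thesis .
qed

lemma length_sorted_probs:
  "finite (set_pmf p) \<Longrightarrow> length (sorted_probs p) = card (set_pmf p)"
  by (metis sorted_probs_def length_rev mset_sorted_list_of_multiset size_image_mset
      size_mset size_mset_set)

lemma sorted_vec_antimono:
  assumes "i \<le> j"
  shows "sorted_vec p j \<le> sorted_vec p i"
proof -
  let ?L = "sorted_list_of_multiset (image_mset (pmf p) (mset_set (set_pmf p)))"
  have nonneg: "0 \<le> x" if "x \<in> set (sorted_probs p)" for x
    using that by (cases "finite (set_pmf p)") (auto simp: sorted_probs_def)
  have "sorted ?L" by simp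
  then have "j < length (sorted_probs p) \<Longrightarrow> sorted_probs p ! j \<le> sorted_probs p ! i"
    using assms by (simp add: sorted_probs_def rev_nth sorted_nth_mono)
  then show ?thesis
    using assms nonneg by (auto simp: sorted_vec_def)
qed

lemma sorted_vec_bij_betw_set_pmf:
  assumes "finite (set_pmf p)"
  obtains \<sigma> where "bij_betw \<sigma> {..<card (set_pmf p)} (set_pmf p)"
    and "\<And>i. i < card (set_pmf p) \<Longrightarrow> sorted_vec p i = pmf p (\<sigma> i)"
proof -
  obtain xs where xs: "distinct xs" "set xs = set_pmf p"
    using finite_distinct_list[OF assms] by blast
  have len: "length xs = card (set_pmf p)"
    using xs distinct_card by fastforce
  have "mset (sorted_probs p) = mset (map (pmf p) xs)"
    using xs by (simp add: sorted_probs_def flip: mset_set_set)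
  then obtain \<pi> where \<pi>: "bij_betw \<pi> {..<card (set_pmf p)} {..<card (set_pmf p)}"
      "\<And>i. i < card (set_pmf p) \<Longrightarrow> sorted_probs p ! i = map (pmf p) xs ! \<pi> i"
    using permutation_Ex_bij[of "sorted_probs p" "map (pmf p) xs"] assms len
    by (auto simp: length_sorted_probs)
  have \<pi>_less: "i < card (set_pmf p) \<Longrightarrow> \<pi> i < length xs" for i
    using \<pi>(1) len by (auto dest: bij_betwE)
  show ?thesis
  proof
    have "bij_betw ((!) xs) {..<card (set_pmf p)} (set_pmf p)"
      using xs len by (intro bij_betw_nth) auto
    then show "bij_betw ((!) xs \<circ> \<pi>) {..<card (set_pmf p)} (set_pmf p)"
      by (rule bij_betw_trans[OF \<pi>(1)])
    show "sorted_vec p i = pmf p (((!) xs \<circ> \<pi>) i)" if "i < card (set_pmf p)" for i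
      using that \<pi>(2) \<pi>_less assms by (simp add: sorted_vec_def length_sorted_probs)
  qed
qed

lemma sorted_vec_pos:
  assumes "finite (set_pmf p)" "i < card (set_pmf p)"
  shows "0 < sorted_vec p i"
proof -
  obtain \<sigma> where "bij_betw \<sigma> {..<card (set_pmf p)} (set_pmf p)"
    and "\<And>i. i < card (set_pmf p) \<Longrightarrow> sorted_vec p i = pmf p (\<sigma> i)"
    using sorted_vec_bij_betw_set_pmf[OF assms(1)] by blast
  then show ?thesis
    using assms(2) by (auto simp: pmf_positive dest: bij_betwE)
qed

lemma shannon_entropy_sorted_vec:
  assumes "finite (set_pmf p)"
  shows "shannon_entropy p =
    - (\<Sum>i<card (set_pmf p). sorted_vec p i * log 2 (sorted_vec p i))"
proof -
  obtain \<sigma> where \<sigma>: "bij_betw \<sigma> {..<card (set_pmf p)} (set_pmf p)"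
    and vec: "\<And>i. i < card (set_pmf p) \<Longrightarrow> sorted_vec p i = pmf p (\<sigma> i)"
    using sorted_vec_bij_betw_set_pmf[OF assms] by blast
  have "(\<Sum>x\<in>set_pmf p. pmf p x * log 2 (pmf p x))
      = (\<Sum>i<card (set_pmf p). pmf p (\<sigma> i) * log 2 (pmf p (\<sigma> i)))"
    by (rule sum.reindex_bij_betw[OF \<sigma>, symmetric])
  then show ?thesis
    by (simp add: shannon_entropy_def vec)
qed

lemma sum_le_sum_lessThan_card_if_antimono:
  fixes b :: "nat \<Rightarrow> real"
  assumes antimono: "\<And>i j. i \<le> j \<Longrightarrow> j < n \<Longrightarrow> b j \<le> b i"
    and "I \<subseteq> {..<n}"
  shows "sum b I \<le> sum b {..<card I}"
  using assms(2)
proof (induction "card I" arbitrary: I)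
  case 0
  then show ?case
    using finite_subset[of I "{..<n}"] by auto
next
  case (Suc k)
  have fin: "finite I"
    using Suc.prems finite_subset by blast
  define M where "M = Max I"
  have "I \<noteq> {}"
    using Suc.hyps(2) by auto
  then have M: "M \<in> I"
    using fin by (simp add: M_def)
  have "card I \<le> card {..M}"
    using fin by (intro card_mono) (auto simp: M_def)
  then have "b M \<le> b k"
    using antimono M Suc.prems Suc.hyps(2) by auto
  moreover have "sum b (I - {M}) \<le> sum b {..<k}"
  proof -
    have "k = card (I - {M})"
      using Suc.hyps(2) M fin by simp
    then show ?thesis
      using Suc.hyps(1) Suc.prems by blast
  qed
  ultimately show ?case
    using fin M by (simp add: sum.remove flip: Suc.hyps(2))
qed

lemma sum_mult_reindex_le_sorted:
  fixes a b :: "nat \<Rightarrow> real"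
  assumes b_antimono: "\<And>i j. i \<le> j \<Longrightarrow> j < n \<Longrightarrow> b j \<le> b i"
    and a_antimono: "\<And>i j. i \<le> j \<Longrightarrow> j < m \<Longrightarrow> a j \<le> a i"
    and a_nonneg: "\<And>j. j < m \<Longrightarrow> 0 \<le> a j"
    and inj: "inj_on h {..<m}" and range: "h ` {..<m} \<subseteq> {..<n}"
  shows "(\<Sum>j<m. a j * b (h j)) \<le> (\<Sum>j<m. a j * b j)"
  using a_antimono a_nonneg inj range
proof (induction m arbitrary: a)
  case 0
  then show ?case by simp
next
  case (Suc k)
  define a' where "a' j = a j - a k" for j
  \<comment> \<open>Abel summation: peel off the constant level a k.\<close>
  have split: "(\<Sum>j<Suc k. a j * c j) = a k * (\<Sum>j<Suc k. c j) + (\<Sum>j<k. a' j * c j)"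
    for c :: "nat \<Rightarrow> real"
    by (simp add: a'_def sum_distrib_left left_diff_distrib sum_subtractf distrib_left)
  have "(\<Sum>j<k. a' j * b (h j)) \<le> (\<Sum>j<k. a' j * b j)"
    using Suc.prems by (intro Suc.IH) (auto simp: a'_def image_subset_iff intro: inj_on_subset)
  moreover have "(\<Sum>j<Suc k. b (h j)) \<le> (\<Sum>j<Suc k. b j)"
    using sum_le_sum_lessThan_card_if_antimono[OF b_antimono Suc.prems(4)] Suc.prems(3)
    by (simp add: sum.reindex card_image)
  then have "a k * (\<Sum>j<Suc k. b (h j)) \<le> a k * (\<Sum>j<Suc k. b j)"
    using Suc.prems(2) by (intro mult_left_mono) auto
  ultimately show ?case
    unfolding split[of "\<lambda>j. b (h j)"] split[of b] by linarith
qed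

lemma pmf_le_pmf_map_pmf: "pmf p x \<le> pmf (map_pmf f p) (f x)"
proof -
  have "pmf p x = measure p {x}"
    by (simp add: measure_pmf_single)
  also have "\<dots> \<le> measure p (f -` {f x})"
    by (rule measure_pmf.finite_measure_mono) auto
  also have "\<dots> = pmf (map_pmf f p) (f x)"
    by (simp add: pmf_map)
  finally show ?thesis .
qed

lemma cond_entropy_eq_0_imp_pmf_eq_pmf_fst:
  assumes fin: "finite (set_pmf J)" and H0: "cond_entropy J = 0" and u: "u \<in> set_pmf J"
  shows "pmf J u = pmf (map_pmf fst J) (fst u)"
proof -
  define r where "r v = pmf J v / pmf (map_pmf fst J) (fst v)" for v
  have r: "0 < r v \<and> r v \<le> 1" if v: "v \<in> set_pmf J" for v
  proof -
    have "0 < pmf J v"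
      using v by (rule pmf_positive)
    moreover have "pmf J v \<le> pmf (map_pmf fst J) (fst v)"
      by (rule pmf_le_pmf_map_pmf)
    ultimately show ?thesis
      by (simp add: r_def)
  qed
  have nonneg: "0 \<le> - (pmf J v * log 2 (r v))" if v: "v \<in> set_pmf J" for v
    using r[OF v] by (simp add: mult_nonneg_nonpos)
  have "(\<Sum>v\<in>set_pmf J. - (pmf J v * log 2 (r v))) = 0"
    using H0 by (simp add: cond_entropy_def r_def sum_negf)
  then have "pmf J u * log 2 (r u) = 0"
    using sum_nonneg_eq_0_iff[OF fin nonneg] u by simp
  then have "log 2 (r u) = 0"
    using pmf_positive[OF u] by simp
  then have "r u = 1"
    using r[OF u] by (simp add: log_def)
  then show ?thesis
    using r[OF u] by (simp add: r_def)
qed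

lemma cond_entropy_eq_0_imp_functional:
  assumes fin: "finite (set_pmf J)" and H0: "cond_entropy J = 0"
  obtains f where "map_pmf snd J = map_pmf f (map_pmf fst J)"
proof -
  have unique: "u = v" if u: "u \<in> set_pmf J" and v: "v \<in> set_pmf J" and uv: "fst u = fst v" for u v
  proof (rule ccontr)
    assume "u \<noteq> v"
    then have "pmf J u + pmf J v = sum (pmf J) {u, v}"
      by simp
    also have "\<dots> \<le> sum (pmf J) {w\<in>set_pmf J. fst w = fst v}"
      by (rule sum_mono2) (use fin u v uv in auto)
    also have "\<dots> = pmf (map_pmf fst J) (fst v)"
      by (rule pmf_map_pmf_finite[OF fin, symmetric])
    also have "\<dots> = pmf J v"
      by (rule cond_entropy_eq_0_imp_pmf_eq_pmf_fst[OF fin H0 v, symmetric])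
    finally show False
      using pmf_positive[OF u] by simp
  qed
  define f where "f x = snd (SOME u. u \<in> set_pmf J \<and> fst u = x)" for x
  have "snd u = (f \<circ> fst) u" if u: "u \<in> set_pmf J" for u
  proof -
    let ?v = "SOME v. v \<in> set_pmf J \<and> fst v = fst u"
    have "?v \<in> set_pmf J \<and> fst ?v = fst u"
      by (rule someI[of _ u]) (simp add: u)
    then have "?v = u"
      using unique[of ?v u] u by simp
    then show ?thesis
      by (simp add: f_def)
  qed
  then have "map_pmf snd J = map_pmf (f \<circ> fst) J"
    by (intro map_pmf_cong) simp_all
  then have "map_pmf snd J = map_pmf f (map_pmf fst J)"
    by (simp add: map_pmf_comp comp_def)
  then show ?thesis
    by (rule that)
qed

text \<open>The witness g picks a point of maximal mass in each fibre of f.\<close>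
lemma sum_pmf_log_pmf_le_fibre_max:
  assumes fin: "finite (set_pmf p)"
  obtains g where "\<And>y. y \<in> set_pmf (map_pmf f p) \<Longrightarrow> g y \<in> set_pmf p \<and> f (g y) = y"
    and "(\<Sum>x\<in>set_pmf p. pmf p x * log 2 (pmf p x))
      \<le> (\<Sum>y\<in>set_pmf (map_pmf f p). pmf (map_pmf f p) y * log 2 (pmf p (g y)))"
proof -
  let ?F = "\<lambda>y. {x\<in>set_pmf p. f x = y}"
  have max_in_fibre: "\<forall>y\<in>set_pmf (map_pmf f p). \<exists>z. z \<in> ?F y \<and> (\<forall>x\<in>?F y. pmf p x \<le> pmf p z)"
  proof
    fix y assume "y \<in> set_pmf (map_pmf f p)"
    have "finite (?F y)" "?F y \<noteq> {}"
      using \<open>y \<in> set_pmf (map_pmf f p)\<close> fin by auto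
    then have "Max (pmf p ` ?F y) \<in> pmf p ` ?F y"
      by simp
    then obtain z where "z \<in> ?F y" "pmf p z = Max (pmf p ` ?F y)"
      by (metis (no_types, lifting) imageE)
    then show "\<exists>z. z \<in> ?F y \<and> (\<forall>x\<in>?F y. pmf p x \<le> pmf p z)"
      using \<open>finite (?F y)\<close> by auto
  qed
  obtain g where g: "\<And>y. y \<in> set_pmf (map_pmf f p) \<Longrightarrow>
      g y \<in> ?F y \<and> (\<forall>x\<in>?F y. pmf p x \<le> pmf p (g y))"
    using bchoice[OF max_in_fibre] by blast
  have fibre: "(\<Sum>x\<in>?F y. pmf p x * log 2 (pmf p x)) \<le> pmf (map_pmf f p) y * log 2 (pmf p (g y))"
    if y: "y \<in> set_pmf (map_pmf f p)" for y
  proof -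
    have "(\<Sum>x\<in>?F y. pmf p x * log 2 (pmf p x)) \<le> (\<Sum>x\<in>?F y. pmf p x * log 2 (pmf p (g y)))"
      using g[OF y] by (intro sum_mono mult_left_mono) (auto simp: pmf_positive)
    also have "\<dots> = pmf (map_pmf f p) y * log 2 (pmf p (g y))"
      by (simp add: pmf_map_pmf_finite[OF fin] sum_distrib_right)
    finally show ?thesis .
  qed
  have "(\<Sum>x\<in>set_pmf p. pmf p x * log 2 (pmf p x))
      = (\<Sum>y\<in>set_pmf (map_pmf f p). \<Sum>x\<in>?F y. pmf p x * log 2 (pmf p x))"
    by (rule sum.group[symmetric]) (use fin in auto)
  also have "\<dots> \<le> (\<Sum>y\<in>set_pmf (map_pmf f p). pmf (map_pmf f p) y * log 2 (pmf p (g y)))"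
    by (intro sum_mono fibre)
  finally show ?thesis
    using that g by blast
qed

lemma sum_pmf_log_pmf_inj_reindex_sorted_vec:
  assumes finp: "finite (set_pmf p)" and finq: "finite (set_pmf q)"
    and inj: "inj_on g (set_pmf q)" and range: "g ` set_pmf q \<subseteq> set_pmf p"
  obtains h where "inj_on h {..<card (set_pmf q)}" and "h ` {..<card (set_pmf q)} \<subseteq> {..<card (set_pmf p)}"
    and "(\<Sum>y\<in>set_pmf q. pmf q y * log 2 (pmf p (g y)))
      = (\<Sum>j<card (set_pmf q). sorted_vec q j * log 2 (sorted_vec p (h j)))"
proof -
  let ?n = "card (set_pmf p)" and ?m = "card (set_pmf q)"
  obtain \<sigma> where \<sigma>: "bij_betw \<sigma> {..<?n} (set_pmf p)"
    and p_vec: "\<And>i. i < ?n \<Longrightarrow> sorted_vec p i = pmf p (\<sigma> i)"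
    using sorted_vec_bij_betw_set_pmf[OF finp] by blast
  obtain \<tau> where \<tau>: "bij_betw \<tau> {..<?m} (set_pmf q)"
    and q_vec: "\<And>i. i < ?m \<Longrightarrow> sorted_vec q i = pmf q (\<tau> i)"
    using sorted_vec_bij_betw_set_pmf[OF finq] by blast
  define h where "h = inv_into {..<?n} \<sigma> \<circ> g \<circ> \<tau>"
  have h: "h j < ?n \<and> \<sigma> (h j) = g (\<tau> j)" if "j < ?m" for j
  proof -
    have g\<tau>: "g (\<tau> j) \<in> \<sigma> ` {..<?n}"
      using that range bij_betwE[OF \<tau>] bij_betw_imp_surj_on[OF \<sigma>] by auto
    show ?thesis
      using inv_into_into[OF g\<tau>] f_inv_into_f[OF g\<tau>] by (simp add: h_def)
  qed
  show ?thesis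
  proof
    show "inj_on h {..<?m}"
    proof (rule inj_onI)
      fix i j assume i: "i \<in> {..<?m}" and j: "j \<in> {..<?m}" and "h i = h j"
      then have "g (\<tau> i) = g (\<tau> j)"
        using h[of i] h[of j] by simp
      then have "\<tau> i = \<tau> j"
        using inj_onD[OF inj] bij_betwE[OF \<tau>] i j by blast
      then show "i = j"
        using inj_onD[OF bij_betw_imp_inj_on[OF \<tau>]] i j by blast
    qed
    show "h ` {..<?m} \<subseteq> {..<?n}"
      using h by auto
    have "(\<Sum>y\<in>set_pmf q. pmf q y * log 2 (pmf p (g y)))
        = (\<Sum>j<?m. pmf q (\<tau> j) * log 2 (pmf p (g (\<tau> j))))"
      by (rule sum.reindex_bij_betw[OF \<tau>, symmetric])
    also have "\<dots> = (\<Sum>j<?m. sorted_vec q j * log 2 (sorted_vec p (h j)))"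
      using q_vec p_vec h by (intro sum.cong) auto
    finally show "(\<Sum>y\<in>set_pmf q. pmf q y * log 2 (pmf p (g y)))
        = (\<Sum>j<?m. sorted_vec q j * log 2 (sorted_vec p (h j)))" .
  qed
qed

lemma sum_pmf_log_pmf_inj_le_sorted_vec:
  assumes finp: "finite (set_pmf p)" and finq: "finite (set_pmf q)"
    and "inj_on g (set_pmf q)" and "g ` set_pmf q \<subseteq> set_pmf p"
  shows "(\<Sum>y\<in>set_pmf q. pmf q y * log 2 (pmf p (g y)))
    \<le> (\<Sum>j<card (set_pmf q). sorted_vec q j * log 2 (sorted_vec p j))"
proof -
  let ?n = "card (set_pmf p)" and ?m = "card (set_pmf q)"
  obtain h where h_inj: "inj_on h {..<?m}" and h_range: "h ` {..<?m} \<subseteq> {..<?n}"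
    and reindex: "(\<Sum>y\<in>set_pmf q. pmf q y * log 2 (pmf p (g y)))
      = (\<Sum>j<?m. sorted_vec q j * log 2 (sorted_vec p (h j)))"
    using sum_pmf_log_pmf_inj_reindex_sorted_vec[OF assms] by blast
  note reindex
  also have "\<dots> \<le> (\<Sum>j<?m. sorted_vec q j * log 2 (sorted_vec p j))"
  proof (rule sum_mult_reindex_le_sorted[OF _ _ _ h_inj h_range])
    show "log 2 (sorted_vec p j) \<le> log 2 (sorted_vec p i)" if "i \<le> j" "j < ?n" for i j
      using that sorted_vec_antimono sorted_vec_pos[OF finp] by simp
    show "sorted_vec q j \<le> sorted_vec q i" if "i \<le> j" for i j
      using that by (rule sorted_vec_antimono)
    show "0 \<le> sorted_vec q j" if "j < ?m" for j
      using sorted_vec_pos[OF finq that] by simp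
  qed
  finally show ?thesis .
qed

lemma rel_entropy_sorted_vec:
  assumes finp: "finite (set_pmf p)" and finq: "finite (set_pmf q)"
    and card_le: "card (set_pmf q) \<le> card (set_pmf p)"
  shows "rel_entropy (sorted_vec q) (sorted_vec p) (card (set_pmf p))
    = - shannon_entropy q - (\<Sum>j<card (set_pmf q). sorted_vec q j * log 2 (sorted_vec p j))"
proof -
  let ?n = "card (set_pmf p)" and ?m = "card (set_pmf q)"
  let ?d = "\<lambda>i. if sorted_vec q i = 0 then 0 else sorted_vec q i * log 2 (sorted_vec q i / sorted_vec p i)"
  have "rel_entropy (sorted_vec q) (sorted_vec p) ?n = (\<Sum>i<?m. ?d i)"
  proof -
    have "sorted_vec q i = 0" if "?m \<le> i" for i
      using that finq by (simp add: sorted_vec_def length_sorted_probs)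
    then show ?thesis
      unfolding rel_entropy_def using card_le by (intro sum.mono_neutral_right) auto
  qed
  also have "\<dots> = (\<Sum>i<?m. sorted_vec q i * log 2 (sorted_vec q i) - sorted_vec q i * log 2 (sorted_vec p i))"
  proof (rule sum.cong)
    fix i assume "i \<in> {..<?m}"
    then have "0 < sorted_vec q i" "0 < sorted_vec p i"
      using card_le sorted_vec_pos[OF finq] sorted_vec_pos[OF finp] by auto
    then show "?d i = sorted_vec q i * log 2 (sorted_vec q i) - sorted_vec q i * log 2 (sorted_vec p i)"
      by (simp add: log_divide right_diff_distrib)
  qed simp
  finally show ?thesis
    by (simp add: shannon_entropy_sorted_vec[OF finq] sum_subtractf)
qed

lemma shannon_entropy_map_pmf_plus_rel_entropy_le:
  assumes fin: "finite (set_pmf p)"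
  shows "shannon_entropy (map_pmf f p)
      + rel_entropy (sorted_vec (map_pmf f p)) (sorted_vec p) (card (set_pmf p))
    \<le> shannon_entropy p"
proof -
  let ?q = "map_pmf f p"
  have finq: "finite (set_pmf ?q)"
    using fin by simp
  have card_le: "card (set_pmf ?q) \<le> card (set_pmf p)"
    using fin by (simp add: card_image_le)
  obtain g where g: "\<And>y. y \<in> set_pmf ?q \<Longrightarrow> g y \<in> set_pmf p \<and> f (g y) = y"
    and fibre_bound: "(\<Sum>x\<in>set_pmf p. pmf p x * log 2 (pmf p x))
      \<le> (\<Sum>y\<in>set_pmf ?q. pmf ?q y * log 2 (pmf p (g y)))"
    using sum_pmf_log_pmf_le_fibre_max[OF fin] by blast
  have "inj_on g (set_pmf ?q)"
    using g by (intro inj_on_inverseI[where g = f]) blast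
  moreover have "g ` set_pmf ?q \<subseteq> set_pmf p"
    using g by blast
  ultimately have "(\<Sum>x\<in>set_pmf p. pmf p x * log 2 (pmf p x))
      \<le> (\<Sum>j<card (set_pmf ?q). sorted_vec ?q j * log 2 (sorted_vec p j))"
    using fibre_bound sum_pmf_log_pmf_inj_le_sorted_vec[OF fin finq] by fastforce
  then show ?thesis
    by (simp add: rel_entropy_sorted_vec[OF fin finq card_le] shannon_entropy_def)
qed

theorem corollary2:
  fixes J :: "('a \<times> 'b) pmf"
  assumes "finite (set_pmf J)"
    and "cond_entropy J = 0"
  shows "shannon_entropy (map_pmf fst J) \<ge>
           shannon_entropy (map_pmf snd J)
           + rel_entropy (sorted_vec (map_pmf snd J)) (sorted_vec (map_pmf fst J))
               (max (card (set_pmf (map_pmf fst J))) (card (set_pmf (map_pmf snd J))))"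
proof -
  obtain f where Y: "map_pmf snd J = map_pmf f (map_pmf fst J)"
    using cond_entropy_eq_0_imp_functional[OF assms] .
  have fin: "finite (set_pmf (map_pmf fst J))"
    using assms(1) by simp
  have "card (set_pmf (map_pmf snd J)) \<le> card (set_pmf (map_pmf fst J))"
    using fin by (simp add: Y card_image_le)
  then have max_eq: "max (card (set_pmf (map_pmf fst J))) (card (set_pmf (map_pmf snd J)))
      = card (set_pmf (map_pmf fst J))"
    by (rule max_absorb1)
  show ?thesis
    unfolding max_eq unfolding Y by (rule shannon_entropy_map_pmf_plus_rel_entropy_le[OF fin])
qed

end
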